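(* If $G$ is a diamond-necklace $N_k$ for some $k\ge 2$, then $m(G,2) = u(G)+1$ (that is, $m(N_k,2)=k+1$).
   Context: A diamond is a graph isomorphic to $K_4$ minus one edge. Diamond-necklace: for $k\ge 2$, take $k$ disjoint diamonds $D_1,\dots,D_k$ with $V(D_i)=\{a_i,b_i,c_i,d_i\}$ where $a_ib_i$ is the missing edge, and add the edges $a_ib_{i+1}$ for $i\in\{1,\dots,k-1\}$ and the edge $a_kb_1$; the result is $N_k$. For a connected claw-free cubic graph $G\ne K_4$, $V(G)$ is uniquely partitioned into sets inducing triangles or diamonds, called units; $u(G)$ is their number (for $N_k$, the units are the $k$ diamonds $D_i$). $r$-percolation: starting from a set $S$ of infected vertices, repeatedly infect any uninfected vertex having at least $r$ infected neighbors. $S$ is an $r$-percolating set if eventually all vertices are infected; $m(G,r)$ is the minimum cardinality of an $r$-percolating set of $G$. *)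

theory Defs
  imports Main
begin

text \<open>A (simple) graph is given by a vertex set V and a symmetric irreflexive
adjacency relation E.\<close>

definition perc_step :: "'a set \<Rightarrow> ('a \<Rightarrow> 'a \<Rightarrow> bool) \<Rightarrow> nat \<Rightarrow> 'a set \<Rightarrow> 'a set" where
  "perc_step V E r S = S \<union> {x \<in> V. card {y \<in> V. E x y \<and> y \<in> S} \<ge> r}"

definition percolating :: "'a set \<Rightarrow> ('a \<Rightarrow> 'a \<Rightarrow> bool) \<Rightarrow> nat \<Rightarrow> 'a set \<Rightarrow> bool" where
  "percolating V E r S \<longleftrightarrow> S \<subseteq> V \<and> (\<exists>n. (perc_step V E r ^^ n) S = V)"

definition m_perc :: "'a set \<Rightarrow> ('a \<Rightarrow> 'a \<Rightarrow> bool) \<Rightarrow> nat \<Rightarrow> nat" where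
  "m_perc V E r = (LEAST n. \<exists>S. percolating V E r S \<and> card S = n)"

text \<open>Vertex (i,p) with i < k, p < 4 is a_i, b_i, c_i, d_i
for p = 0,1,2,3 (diamonds indexed 0..k-1). Inside a diamond all pairs are adjacent
except a_i b_i; in addition a_i is adjacent to b_(i+1 mod k).\<close>
definition necklace_V :: "nat \<Rightarrow> (nat \<times> nat) set" where
  "necklace_V k = {..<k} \<times> {..<4}"

definition necklace_E :: "nat \<Rightarrow> nat \<times> nat \<Rightarrow> nat \<times> nat \<Rightarrow> bool" where
  "necklace_E k u v = (case u of (i, p) \<Rightarrow> case v of (j, q) \<Rightarrow>
     i < k \<and> j < k \<and> p < 4 \<and> q < 4 \<and>
     ((i = j \<and> p \<noteq> q \<and> {p, q} \<noteq> {0, 1}) \<or>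
      (p = 0 \<and> q = 1 \<and> j = Suc i mod k) \<or>
      (p = 1 \<and> q = 0 \<and> i = Suc j mod k)))"

end

theory Submission
  imports Defs
begin

(* Call a vertex set C immune if each of its vertices has fewer than r neighbours outside C;
   an immune set disjoint from S is never infected, so S cannot percolate.
   Lower bound: if |S| <= k, either some diamond misses S, and that diamond is immune, or S meets
   every diamond exactly once.  If S contains a tip a_i or b_i, the rest of D_i is immune;
   otherwise every vertex of S is some c_i or d_i, whose neighbours all lie in D_i, and V - S
   is immune.
   Upper bound: {c_0, ..., c_(k-1), d_0} percolates: c_0, d_0 infect a_0 and b_0, and then a_i
   and c_(i+1) infect b_(i+1), which with c_(i+1) infects d_(i+1), and c_(i+1), d_(i+1)
   infect a_(i+1). *)

definition perc_closure :: "'a set \<Rightarrow> ('a \<Rightarrow> 'a \<Rightarrow> bool) \<Rightarrow> nat \<Rightarrow> 'a set \<Rightarrow> 'a set" where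
  "perc_closure V E r S = (\<Union>n. (perc_step V E r ^^ n) S)"

definition immune :: "'a set \<Rightarrow> ('a \<Rightarrow> 'a \<Rightarrow> bool) \<Rightarrow> nat \<Rightarrow> 'a set \<Rightarrow> bool" where
  "immune V E r C \<longleftrightarrow> (\<forall>x\<in>C. card {y \<in> V. E x y \<and> y \<notin> C} < r)"

lemma perc_step_incr: "A \<subseteq> perc_step V E r A"
  by (auto simp: perc_step_def)

lemma mem_perc_step_iff:
  "x \<in> perc_step V E r A \<longleftrightarrow> x \<in> A \<or> (x \<in> V \<and> r \<le> card {y \<in> V. E x y \<and> y \<in> A})"
  by (auto simp: perc_step_def)

lemma perc_iter_mono:
  "m \<le> n \<Longrightarrow> (perc_step V E r ^^ m) S \<subseteq> (perc_step V E r ^^ n) S"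
  by (rule lift_Suc_mono_le[of "\<lambda>n. (perc_step V E r ^^ n) S"]) (simp_all add: perc_step_incr)

lemma perc_iter_subset: "S \<subseteq> V \<Longrightarrow> (perc_step V E r ^^ n) S \<subseteq> V"
  by (induction n) (auto simp: perc_step_def)

lemma finite_subset_UN_mono_seq:
  fixes A :: "nat \<Rightarrow> 'a set"
  assumes "finite V" "V \<subseteq> (\<Union>n. A n)" "\<And>n. A n \<subseteq> A (Suc n)"
  shows "\<exists>n. V \<subseteq> A n"
  using assms(1,2)
proof (induction V rule: finite_induct)
  case empty
  then show ?case by simp
next
  case (insert x F)
  then obtain n m where "F \<subseteq> A n" "x \<in> A m"
    by blast
  moreover have "A n \<subseteq> A (max n m)" "A m \<subseteq> A (max n m)"
    by (simp_all add: lift_Suc_mono_le[of A, OF assms(3)])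
  ultimately show ?case
    by blast
qed

lemma percolatingI_closure:
  assumes "finite V" "S \<subseteq> V" "V \<subseteq> perc_closure V E r S"
  shows "percolating V E r S"
proof -
  obtain n where "V \<subseteq> (perc_step V E r ^^ n) S"
    using finite_subset_UN_mono_seq[OF assms(1) assms(3)[unfolded perc_closure_def]]
    by (auto simp: perc_step_incr)
  then show ?thesis
    using perc_iter_subset[OF assms(2)] assms(2) unfolding percolating_def by blast
qed

lemma subset_perc_closure: "S \<subseteq> perc_closure V E r S"
proof -
  have "(perc_step V E r ^^ 0) S \<subseteq> perc_closure V E r S"
    unfolding perc_closure_def by blast
  then show ?thesis
    by simp
qed

lemma perc_closure_two_neighbours:
  assumes "finite V" "x \<in> V" "y \<in> V" "z \<in> V" "y \<noteq> z" "E x y" "E x z"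
    and "y \<in> perc_closure V E 2 S" "z \<in> perc_closure V E 2 S"
  shows "x \<in> perc_closure V E 2 S"
proof -
  obtain m n where "y \<in> (perc_step V E 2 ^^ m) S" "z \<in> (perc_step V E 2 ^^ n) S"
    using assms(8,9) unfolding perc_closure_def by blast
  then have "y \<in> (perc_step V E 2 ^^ max m n) S" "z \<in> (perc_step V E 2 ^^ max m n) S"
    using perc_iter_mono[of m "max m n" V E 2 S] perc_iter_mono[of n "max m n" V E 2 S] by auto
  then have "{y, z} \<subseteq> {w \<in> V. E x w \<and> w \<in> (perc_step V E 2 ^^ max m n) S}"
    using assms(3,4,6,7) by blast
  then have "card {y, z} \<le> card {w \<in> V. E x w \<and> w \<in> (perc_step V E 2 ^^ max m n) S}"
    using assms(1) by (intro card_mono) auto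
  then have "x \<in> (perc_step V E 2 ^^ Suc (max m n)) S"
    using assms(2,5) by (simp add: mem_perc_step_iff)
  then show ?thesis
    unfolding perc_closure_def by blast
qed

lemma immune_disjoint_perc_iter:
  assumes "finite V" "immune V E r C" "C \<inter> S = {}"
  shows "(perc_step V E r ^^ n) S \<inter> C = {}"
proof (induction n)
  case 0
  then show ?case using assms(3) by auto
next
  case (Suc n)
  let ?A = "(perc_step V E r ^^ n) S"
  have "x \<notin> perc_step V E r ?A" if "x \<in> C" for x
  proof -
    have "{y \<in> V. E x y \<and> y \<in> ?A} \<subseteq> {y \<in> V. E x y \<and> y \<notin> C}"
      using Suc.IH by blast
    then have "card {y \<in> V. E x y \<and> y \<in> ?A} \<le> card {y \<in> V. E x y \<and> y \<notin> C}"
      using assms(1) by (intro card_mono) auto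
    also have "\<dots> < r"
      using assms(2) that unfolding immune_def by blast
    finally have "card {y \<in> V. E x y \<and> y \<in> ?A} < r" .
    then show ?thesis
      using Suc.IH that by (auto simp: mem_perc_step_iff)
  qed
  then show ?case by auto
qed

lemma immune_not_percolating:
  assumes "finite V" "immune V E r C" "C \<subseteq> V" "C \<noteq> {}" "C \<inter> S = {}"
  shows "\<not> percolating V E r S"
  using immune_disjoint_perc_iter[OF assms(1,2,5)] assms(3,4) unfolding percolating_def by blast

lemma immune_2I:
  assumes "finite V"
    and "\<And>x y z. x \<in> C \<Longrightarrow> E x y \<Longrightarrow> E x z \<Longrightarrow> y \<in> V - C \<Longrightarrow> z \<in> V - C \<Longrightarrow> y = z"
  shows "immune V E 2 C"
  unfolding immune_def
proof
  fix x assume "x \<in> C"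
  then have "card {y \<in> V. E x y \<and> y \<notin> C} \<le> Suc 0"
    using assms by (subst card_le_Suc0_iff_eq) auto
  then show "card {y \<in> V. E x y \<and> y \<notin> C} < 2" by simp
qed

lemma necklace_E_iff:
  "necklace_E k (i, p) (j, q) \<longleftrightarrow> i < k \<and> j < k \<and> p < 4 \<and> q < 4 \<and>
     ((i = j \<and> p \<noteq> q \<and> \<not> (p < 2 \<and> q < 2)) \<or>
      (p = 0 \<and> q = 1 \<and> j = Suc i mod k) \<or> (p = 1 \<and> q = 0 \<and> i = Suc j mod k))"
proof -
  have "p \<noteq> q \<and> {p, q} \<noteq> {0, 1} \<longleftrightarrow> p \<noteq> q \<and> \<not> (p < 2 \<and> q < 2)"
    unfolding doubleton_eq_iff by linarith
  then show ?thesis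
    unfolding necklace_E_def by (simp only: prod.case)
qed

lemma finite_necklace_V: "finite (necklace_V k)"
  by (simp add: necklace_V_def)

lemma necklace_E_in_V:
  assumes "necklace_E k u v"
  shows "u \<in> necklace_V k" "v \<in> necklace_V k"
proof -
  obtain i p j q where "u = (i, p)" "v = (j, q)"
    by (cases u, cases v)
  moreover have "i < k \<and> j < k \<and> p < 4 \<and> q < 4"
    using assms calculation unfolding necklace_E_def by simp
  ultimately show "u \<in> necklace_V k" "v \<in> necklace_V k"
    by (simp_all add: necklace_V_def)
qed

lemma necklace_E_between_diamonds:
  "necklace_E k (i, p) (j, q) \<Longrightarrow> i \<noteq> j \<Longrightarrow> p < 2 \<and> q < 2"
  unfolding necklace_E_iff by auto

lemma Suc_mod_inj:
  assumes "j < k" "j' < k" "Suc j mod k = Suc j' mod k"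
  shows "j = j'"
proof -
  have "Suc n mod k = (if Suc n = k then 0 else Suc n)" if "n < k" for n
    using that by auto
  then show ?thesis
    using assms by (simp split: if_splits)
qed

lemma necklace_external_neighbour_unique:
  assumes "necklace_E k (i, p) (j, q)" "necklace_E k (i, p) (j', q')" "j \<noteq> i" "j' \<noteq> i"
  shows "(j, q) = (j', q')"
proof -
  have "p < 2"
    using assms(1,3) necklace_E_between_diamonds by blast
  then consider "p = 0" | "p = 1"
    by linarith
  then show ?thesis
  proof cases
    case 1
    then show ?thesis
      using assms unfolding necklace_E_iff by simp
  next
    case 2
    then have "Suc j mod k = Suc j' mod k" "j < k" "j' < k" "q = 0" "q' = 0"
      using assms unfolding necklace_E_iff by simp_all
    then show ?thesis
      using Suc_mod_inj by blast
  qed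
qed

lemma necklace_diamond_immune:
  "immune (necklace_V k) (necklace_E k) 2 ({i} \<times> {..<4})"
proof (rule immune_2I[OF finite_necklace_V])
  fix x y z
  assume x: "x \<in> {i} \<times> {..<4}" and "necklace_E k x y" "necklace_E k x z"
    and y: "y \<in> necklace_V k - {i} \<times> {..<4}" and z: "z \<in> necklace_V k - {i} \<times> {..<4}"
  moreover have "x = (i, snd x)"
    using x by auto
  moreover have "fst y \<noteq> i" "fst z \<noteq> i"
    using y z by (auto simp: necklace_V_def)
  ultimately show "y = z"
    using necklace_external_neighbour_unique[of k i "snd x" "fst y" "snd y" "fst z" "snd z"]
    by simp
qed

(* The two tips of a diamond are adjacent only via the wrap-around edge of N_1. *)
lemma necklace_tip_edge_no_external_neighbour:
  assumes "necklace_E k (i, q) (i, p)" "necklace_E k (i, q) (j, r)" "j \<noteq> i"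
  shows "2 \<le> p"
proof (rule ccontr)
  assume "\<not> 2 \<le> p"
  then have "p < 2"
    by simp
  moreover have "q < 2" "i < k" "j < k"
    using assms(2,3) necklace_E_between_diamonds unfolding necklace_E_iff by blast+
  ultimately have "i = Suc i mod k"
    using assms(1) unfolding necklace_E_iff by blast
  then have "Suc i = k"
    using \<open>i < k\<close> by (metis Suc_lessI mod_less n_not_Suc_n)
  then show False
    using \<open>i = Suc i mod k\<close> \<open>j < k\<close> assms(3) by simp
qed

lemma necklace_diamond_minus_tip_immune:
  assumes "p < 2"
  shows "immune (necklace_V k) (necklace_E k) 2 ({i} \<times> {..<4} - {(i, p)})"
proof (rule immune_2I[OF finite_necklace_V])
  let ?C = "{i} \<times> {..<4} - {(i, p)}"
  fix x y z
  assume x: "x \<in> ?C" and xy: "necklace_E k x y" and xz: "necklace_E k x z"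
    and y: "y \<in> necklace_V k - ?C" and z: "z \<in> necklace_V k - ?C"
  obtain q where x_eq: "x = (i, q)"
    using x by auto
  have outside: "w = (i, p) \<or> fst w \<noteq> i" if "w \<in> necklace_V k - ?C" for w
    using that by (auto simp: necklace_V_def)
  have no_mix: False if "necklace_E k x (i, p)" "necklace_E k x w" "fst w \<noteq> i" for w
    using necklace_tip_edge_no_external_neighbour[of k i q p "fst w" "snd w"] that assms
    by (simp add: x_eq)
  show "y = z"
  proof (cases "fst y = i")
    case True
    then have "y = (i, p)"
      using outside[OF y] by auto
    moreover have "fst z = i"
      using no_mix[of z] xy xz \<open>y = (i, p)\<close> by blast
    ultimately show ?thesis
      using outside[OF z] by auto
  next
    case False
    have "fst z \<noteq> i"
    proof
      assume "fst z = i"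
      then have "z = (i, p)"
        using outside[OF z] by auto
      then show False
        using no_mix[of y] xy xz False by simp
    qed
    then show ?thesis
      using necklace_external_neighbour_unique[of k i q "fst y" "snd y" "fst z" "snd z"] xy xz \<open>fst y \<noteq> i\<close>
      by (simp add: x_eq)
  qed
qed

lemma necklace_complement_immune:
  assumes "inj_on fst S" "\<And>v. v \<in> S \<Longrightarrow> 2 \<le> snd v"
  shows "immune (necklace_V k) (necklace_E k) 2 (necklace_V k - S)"
proof (rule immune_2I[OF finite_necklace_V])
  fix x y z
  assume xy: "necklace_E k x y" and xz: "necklace_E k x z"
    and y: "y \<in> necklace_V k - (necklace_V k - S)" and z: "z \<in> necklace_V k - (necklace_V k - S)"
  have same_diamond: "fst w = fst x" if "necklace_E k x w" "w \<in> S" for w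
  proof (rule ccontr)
    assume "fst w \<noteq> fst x"
    then have "snd w < 2"
      using necklace_E_between_diamonds[of k "fst x" "snd x" "fst w" "snd w"] that(1) by simp
    then show False
      using assms(2)[OF that(2)] by simp
  qed
  have "y \<in> S" "z \<in> S"
    using y z by auto
  moreover have "fst y = fst z"
    using same_diamond[OF xy \<open>y \<in> S\<close>] same_diamond[OF xz \<open>z \<in> S\<close>] by simp
  ultimately show "y = z"
    using inj_onD[OF assms(1)] by blast
qed

lemma necklace_percolating_card_gt:
  assumes "0 < k" and perc: "percolating (necklace_V k) (necklace_E k) 2 S"
  shows "k < card S"
proof (rule ccontr)
  assume "\<not> k < card S"
  have S_sub: "S \<subseteq> necklace_V k"
    using perc unfolding percolating_def by blast
  have no_immune: "C = {}"
    if "immune (necklace_V k) (necklace_E k) 2 C" "C \<subseteq> necklace_V k" "C \<inter> S = {}" for C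
  proof (rule ccontr)
    assume "C \<noteq> {}"
    then show False
      using immune_not_percolating[OF finite_necklace_V that(1,2) _ that(3)] perc by simp
  qed
  show False
  proof (cases "fst ` S = {..<k}")
    case False
    moreover have "fst ` S \<subseteq> {..<k}"
      using S_sub by (auto simp: necklace_V_def)
    ultimately obtain i where "i < k" "i \<notin> fst ` S"
      by blast
    then have "{i} \<times> {..<4::nat} = {}"
      by (intro no_immune[OF necklace_diamond_immune]) (auto simp: necklace_V_def image_iff)
    then show False
      by (simp add: lessThan_empty_iff)
  next
    case True
    have "finite S"
      using S_sub finite_necklace_V by (rule finite_subset)
    moreover have "card S \<le> card (fst ` S)"
      using True \<open>\<not> k < card S\<close> by simp
    ultimately have inj: "inj_on fst S"
      by (simp add: card_image_le eq_card_imp_inj_on le_antisym)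
    show False
    proof (cases "\<exists>v \<in> S. snd v < 2")
      case True
      then obtain i p where "(i, p) \<in> S" "p < 2"
        by auto
      moreover have "i < k"
        using S_sub \<open>(i, p) \<in> S\<close> by (auto simp: necklace_V_def)
      moreover have "(i, q) \<notin> S" if "q \<noteq> p" for q
        using inj_onD[OF inj, of "(i, q)" "(i, p)"] \<open>(i, p) \<in> S\<close> that by auto
      ultimately have "{i} \<times> {..<4} - {(i, p)} = {}"
        by (intro no_immune[OF necklace_diamond_minus_tip_immune[OF \<open>p < 2\<close>]])
          (auto simp: necklace_V_def)
      moreover have "(i, 2) \<in> {i} \<times> {..<4} - {(i, p)}"
        using \<open>p < 2\<close> by simp
      ultimately show False
        by blast
    next
      case False
      then have "necklace_V k - S = {}"
        by (intro no_immune[OF necklace_complement_immune[OF inj]]) auto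
      moreover have "(0, 0) \<in> necklace_V k - S"
        using False \<open>0 < k\<close> by (auto simp: necklace_V_def)
      ultimately show False
        by blast
    qed
  qed
qed

lemma necklace_percolating_seed:
  assumes "0 < k"
  shows "percolating (necklace_V k) (necklace_E k) 2 ({..<k} \<times> {2} \<union> {(0, 3)})"
proof -
  let ?S = "{..<k} \<times> {2} \<union> {(0, 3)}"
  let ?cl = "perc_closure (necklace_V k) (necklace_E k) 2 ?S"
  have seed: "v \<in> ?cl" if "v \<in> ?S" for v
    using subset_perc_closure that by (rule subsetD)
  have infect: "x \<in> ?cl"
    if "necklace_E k x y" "necklace_E k x z" "y \<noteq> z" "y \<in> ?cl" "z \<in> ?cl" for x y z
    using perc_closure_two_neighbours[OF finite_necklace_V _ _ _ that(3,1,2,4,5)]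
      necklace_E_in_V[OF that(1)] necklace_E_in_V[OF that(2)] by blast
  have "{i} \<times> {..<4} \<subseteq> ?cl" if "i < k" for i
    using that
  proof (induction i)
    case 0
    have c: "(0, 2) \<in> ?cl" and d: "(0, 3) \<in> ?cl"
      by (rule seed, use assms in simp)+
    have "(0, 0) \<in> ?cl" "(0, 1) \<in> ?cl"
      by (rule infect[OF _ _ _ c d]; simp add: necklace_E_iff assms)+
    with c d show ?case
      by (auto simp: lessThan_nat_numeral)
  next
    case (Suc i)
    have a_prev: "(i, 0) \<in> ?cl"
      using Suc.IH Suc.prems by auto
    have c: "(Suc i, 2) \<in> ?cl"
      by (rule seed) (use Suc.prems in simp)
    have b: "(Suc i, 1) \<in> ?cl"
      by (rule infect[OF _ _ _ a_prev c]) (use Suc.prems in \<open>simp_all add: necklace_E_iff\<close>)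
    have d: "(Suc i, 3) \<in> ?cl"
      by (rule infect[OF _ _ _ b c]) (simp_all add: necklace_E_iff Suc.prems)
    have a: "(Suc i, 0) \<in> ?cl"
      by (rule infect[OF _ _ _ c d]) (simp_all add: necklace_E_iff Suc.prems)
    from a b c d show ?case
      by (auto simp: lessThan_nat_numeral)
  qed
  then have "necklace_V k \<subseteq> ?cl"
    by (auto simp: necklace_V_def)
  moreover have "?S \<subseteq> necklace_V k"
    using assms by (auto simp: necklace_V_def)
  ultimately show ?thesis
    using percolatingI_closure[OF finite_necklace_V] by blast
qed

theorem proposition4p1:
  fixes k :: nat
  assumes "k \<ge> 2"
  shows "m_perc (necklace_V k) (necklace_E k) 2 = k + 1"
  unfolding m_perc_def
proof (rule Least_equality)
  let ?S = "{..<k} \<times> {2::nat} \<union> {(0, 3)}"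
  have "percolating (necklace_V k) (necklace_E k) 2 ?S"
    using assms by (intro necklace_percolating_seed) simp
  moreover have "card ?S = k + 1"
    by (simp add: card_cartesian_product)
  ultimately show "\<exists>S. percolating (necklace_V k) (necklace_E k) 2 S \<and> card S = k + 1"
    by blast
next
  fix n
  assume "\<exists>S. percolating (necklace_V k) (necklace_E k) 2 S \<and> card S = n"
  then obtain S where "percolating (necklace_V k) (necklace_E k) 2 S" "card S = n"
    by blast
  then show "k + 1 \<le> n"
    using necklace_percolating_card_gt[of k S] assms by simp
qed

end
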